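(* Let $\mathcal{C}$ be a category, $J$ a directed partially ordered set, and let $(f,f^j_\mu),(f',f'^j_\mu):\boldsymbol{X}\to\boldsymbol{Y}$ and $(g,g^j_\nu),(g',g'^j_\nu):\boldsymbol{Y}\to\boldsymbol{Z}$ be $J$-morphisms of inverse systems in $\mathcal{C}$. If $(f,f^j_\mu)\sim(f',f'^j_\mu)$ and $(g,g^j_\nu)\sim(g',g'^j_\nu)$, then $(g,g^j_\nu)(f,f^j_\mu)\sim(g',g'^j_\nu)(f',f'^j_\mu)$.
   Context: An inverse system $\boldsymbol{X}=(X_\lambda,p_{\lambda\lambda'},\Lambda)$ in $\mathcal{C}$: $\Lambda$ directed preordered, morphisms $p_{\lambda\lambda'}:X_{\lambda'}\to X_\lambda$ for $\lambda\le\lambda'$, $p_{\lambda\lambda}=1$, $p_{\lambda\lambda'}p_{\lambda'\lambda''}=p_{\lambda\lambda''}$; similarly $\boldsymbol{Y}=(Y_\mu,q_{\mu\mu'},M)$, $\boldsymbol{Z}=(Z_\nu,r_{\nu\nu'},N)$. A $J$-morphism $(f,f^j_\mu):\boldsymbol{X}\to\boldsymbol{Y}$ consists of $f:M\to\Lambda$ and $\mathcal{C}$-morphisms $f^j_\mu:X_{f(\mu)}\to Y_\mu$ ($\mu\in M$, $j\in J$) such that for all $\mu\le\mu'$ there exist $\lambda\ge f(\mu),f(\mu')$ and $j_0$ with $f^{j'}_\mu p_{f(\mu)\lambda}=q_{\mu\mu'}f^{j'}_{\mu'}p_{f(\mu')\lambda}$ for all $j'\ge j_0$. Composition: $(g,g^j_\nu)(f,f^j_\mu)=(fg,g^j_\nu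 f^j_{g(\nu)})$. $(f,f^j_\mu)\sim(f',f'^j_\mu)$ iff for every $\mu$ there exist $\lambda\ge f(\mu),f'(\mu)$ and $j_0$ with $f^{j'}_\mu p_{f(\mu)\lambda}=f'^{j'}_\mu p_{f'(\mu)\lambda}$ for all $j'\ge j_0$ (analogously for morphisms $\boldsymbol{Y}\to\boldsymbol{Z}$ and $\boldsymbol{X}\to\boldsymbol{Z}$). *)

theory Defs
  imports Main
begin

record ('o, 'm) cat =
  Obj  :: "'o set"
  Mor  :: "'m set"
  Dom  :: "'m \<Rightarrow> 'o"
  Cod  :: "'m \<Rightarrow> 'o"
  Id   :: "'o \<Rightarrow> 'm"
  Comp :: "'m \<Rightarrow> 'm \<Rightarrow> 'm"   (* Comp C g f = g \<circ> f, defined when Dom g = Cod f *)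

definition category :: "('o, 'm, 'x) cat_scheme \<Rightarrow> bool" where
  "category C \<longleftrightarrow>
     (\<forall>h\<in>Mor C. Dom C h \<in> Obj C \<and> Cod C h \<in> Obj C) \<and>
     (\<forall>a\<in>Obj C. Id C a \<in> Mor C \<and> Dom C (Id C a) = a \<and> Cod C (Id C a) = a) \<and>
     (\<forall>g\<in>Mor C. \<forall>h\<in>Mor C. Dom C g = Cod C h \<longrightarrow>
        Comp C g h \<in> Mor C \<and> Dom C (Comp C g h) = Dom C h \<and> Cod C (Comp C g h) = Cod C g) \<and>
     (\<forall>h\<in>Mor C. Comp C h (Id C (Dom C h)) = h \<and> Comp C (Id C (Cod C h)) h = h) \<and>
     (\<forall>k\<in>Mor C. \<forall>g\<in>Mor C. \<forall>h\<in>Mor C. Dom C k = Cod C g \<longrightarrow> Dom C g = Cod C h \<longrightarrow>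
        Comp C k (Comp C g h) = Comp C (Comp C k g) h)"

definition directed :: "'a::preorder set \<Rightarrow> bool" where
  "directed A \<longleftrightarrow> A \<noteq> {} \<and> (\<forall>a\<in>A. \<forall>b\<in>A. \<exists>c\<in>A. a \<le> c \<and> b \<le> c)"

definition inverse_system ::
  "('o, 'm, 'x) cat_scheme \<Rightarrow> ('l::preorder \<Rightarrow> 'o) \<Rightarrow> ('l \<Rightarrow> 'l \<Rightarrow> 'm) \<Rightarrow> bool" where
  "inverse_system C X p \<longleftrightarrow>
     directed (UNIV :: 'l set) \<and>
     (\<forall>l. X l \<in> Obj C) \<and>
     (\<forall>l l'. l \<le> l' \<longrightarrow> p l l' \<in> Mor C \<and> Dom C (p l l') = X l' \<and> Cod C (p l l') = X l) \<and>
     (\<forall>l. p l l = Id C (X l)) \<and>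
     (\<forall>l l' l''. l \<le> l' \<longrightarrow> l' \<le> l'' \<longrightarrow> Comp C (p l l') (p l' l'') = p l l'')"

text \<open>A J-morphism (f, F) : (X,p) \<rightarrow> (Y,q), with F j mu = f^j_mu : X (f mu) \<rightarrow> Y mu;
  the directed poset J is the index type 'j.\<close>

definition J_morphism ::
  "('o, 'm, 'x) cat_scheme \<Rightarrow> ('l::preorder \<Rightarrow> 'o) \<Rightarrow> ('l \<Rightarrow> 'l \<Rightarrow> 'm)
   \<Rightarrow> ('u::preorder \<Rightarrow> 'o) \<Rightarrow> ('u \<Rightarrow> 'u \<Rightarrow> 'm)
   \<Rightarrow> ('u \<Rightarrow> 'l) \<times> ('j::order \<Rightarrow> 'u \<Rightarrow> 'm) \<Rightarrow> bool" where
  "J_morphism C X p Y q fF \<longleftrightarrow>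
     (\<forall>j u. snd fF j u \<in> Mor C \<and> Dom C (snd fF j u) = X (fst fF u) \<and> Cod C (snd fF j u) = Y u) \<and>
     (\<forall>u u'. u \<le> u' \<longrightarrow>
        (\<exists>l. fst fF u \<le> l \<and> fst fF u' \<le> l \<and>
          (\<exists>j0. \<forall>j'. j0 \<le> j' \<longrightarrow>
             Comp C (snd fF j' u) (p (fst fF u) l) =
             Comp C (q u u') (Comp C (snd fF j' u') (p (fst fF u') l)))))"

definition J_comp ::
  "('o, 'm, 'x) cat_scheme \<Rightarrow> ('v \<Rightarrow> 'u) \<times> ('j \<Rightarrow> 'v \<Rightarrow> 'm)
   \<Rightarrow> ('u \<Rightarrow> 'l) \<times> ('j \<Rightarrow> 'u \<Rightarrow> 'm) \<Rightarrow> ('v \<Rightarrow> 'l) \<times> ('j \<Rightarrow> 'v \<Rightarrow> 'm)" where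
  "J_comp C gG fF = (fst fF \<circ> fst gG, \<lambda>j v. Comp C (snd gG j v) (snd fF j (fst gG v)))"

definition J_equiv ::
  "('o, 'm, 'x) cat_scheme \<Rightarrow> ('l::preorder \<Rightarrow> 'l \<Rightarrow> 'm)
   \<Rightarrow> ('u \<Rightarrow> 'l) \<times> ('j::order \<Rightarrow> 'u \<Rightarrow> 'm) \<Rightarrow> ('u \<Rightarrow> 'l) \<times> ('j \<Rightarrow> 'u \<Rightarrow> 'm) \<Rightarrow> bool" where
  "J_equiv C p fF fF' \<longleftrightarrow>
     (\<forall>u. \<exists>l. fst fF u \<le> l \<and> fst fF' u \<le> l \<and>
        (\<exists>j0. \<forall>j'. j0 \<le> j' \<longrightarrow>
           Comp C (snd fF j' u) (p (fst fF u) l) = Comp C (snd fF' j' u) (p (fst fF' u) l)))"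

end

theory Submission
  imports Defs
begin

text \<open>Given a level v of Z, the equivalence of the g's yields a level m of Y above g(v) and g'(v)
  where g^j_v and g'^j_v agree after bonding.  The defining squares of f at g(v) \<le> m and of f' at
  g'(v) \<le> m, together with the equivalence of f and f' at m, each hold at some level of X and for
  large j.  All these conditions persist when the level of X is raised, so they hold simultaneously
  at one level and for all j beyond a common bound, and pasting them gives the claim.\<close>

lemma category_comp:
  assumes "category C" "g \<in> Mor C" "h \<in> Mor C" "Dom C g = Cod C h"
  shows "Comp C g h \<in> Mor C" "Dom C (Comp C g h) = Dom C h" "Cod C (Comp C g h) = Cod C g"
  using assms unfolding category_def by auto

lemma category_assoc:
  assumes "category C" "k \<in> Mor C" "g \<in> Mor C" "h \<in> Mor C"
    and "Dom C k = Cod C g" "Dom C g = Cod C h"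
  shows "Comp C k (Comp C g h) = Comp C (Comp C k g) h"
  using assms unfolding category_def by auto

lemma category_paste:
  assumes C: "category C"
    and mor: "g \<in> Mor C" "g' \<in> Mor C" "f \<in> Mor C" "f' \<in> Mor C" "p \<in> Mor C" "p' \<in> Mor C"
      "q \<in> Mor C" "q' \<in> Mor C" "e \<in> Mor C" "e' \<in> Mor C" "s \<in> Mor C" "s' \<in> Mor C"
    and dom: "Dom C g = Cod C f" "Dom C g = Cod C q" "Dom C f = Cod C p" "Dom C q = Cod C e"
      "Dom C e = Cod C s"
      "Dom C g' = Cod C f'" "Dom C g' = Cod C q'" "Dom C f' = Cod C p'" "Dom C q' = Cod C e'"
      "Dom C e' = Cod C s'"
    and top: "Comp C g q = Comp C g' q'"
    and left: "Comp C f p = Comp C (Comp C q e) s"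
    and right: "Comp C f' p' = Comp C (Comp C q' e') s'"
    and bottom: "Comp C e s = Comp C e' s'"
  shows "Comp C (Comp C g f) p = Comp C (Comp C g' f') p'"
proof -
  note comp = category_comp[OF C] and assoc = category_assoc[OF C]
  have "Comp C (Comp C g f) p = Comp C g (Comp C (Comp C q e) s)"
    using assoc[of g f p] left mor dom by simp
  also have "\<dots> = Comp C (Comp C g q) (Comp C e s)"
    using assoc[of q e s] assoc[of g q "Comp C e s"] comp[of e s] mor dom by simp
  also have "\<dots> = Comp C (Comp C g' q') (Comp C e' s')"
    using top bottom by simp
  also have "\<dots> = Comp C g' (Comp C (Comp C q' e') s')"
    using assoc[of q' e' s'] assoc[of g' q' "Comp C e' s'"] comp[of e' s'] mor dom by simp
  also have "\<dots> = Comp C (Comp C g' f') p'"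
    using assoc[of g' f' p'] right mor dom by simp
  finally show ?thesis .
qed

lemma inverse_system_bond:
  assumes "inverse_system C X p" "l \<le> l'"
  shows "p l l' \<in> Mor C" "Dom C (p l l') = X l'" "Cod C (p l l') = X l"
  using assms unfolding inverse_system_def by auto

lemma inverse_system_bond_trans:
  assumes "inverse_system C X p" "l \<le> l'" "l' \<le> l''"
  shows "Comp C (p l l') (p l' l'') = p l l''"
  using assms unfolding inverse_system_def by auto

lemma inverse_system_directed:
  fixes X :: "'l::preorder \<Rightarrow> 'o"
  shows "inverse_system C X p \<Longrightarrow> directed (UNIV :: 'l set)"
  unfolding inverse_system_def by simp

lemma inverse_system_bonded_eq_mono:
  assumes C: "category C" and X: "inverse_system C X p"
    and h: "h \<in> Mor C" "Dom C h = X a" and k: "k \<in> Mor C" "Dom C k = X b"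
    and le: "a \<le> l" "b \<le> l" "l \<le> l'"
    and eq: "Comp C h (p a l) = Comp C k (p b l)"
  shows "Comp C h (p a l') = Comp C k (p b l')"
proof -
  have raise: "Comp C h' (p c l') = Comp C (Comp C h' (p c l)) (p l l')"
    if "h' \<in> Mor C" "Dom C h' = X c" "c \<le> l" for h' c
    using that le(3) inverse_system_bond[OF X] inverse_system_bond_trans[OF X]
      category_assoc[OF C, of h' "p c l" "p l l'"] by simp
  show ?thesis
    using raise[OF h le(1)] raise[OF k le(2)] eq by simp
qed

lemma J_morphism_component:
  assumes "J_morphism C X p Y q fF"
  shows "snd fF j u \<in> Mor C" "Dom C (snd fF j u) = X (fst fF u)" "Cod C (snd fF j u) = Y u"
  using assms unfolding J_morphism_def by auto

text \<open>A stand-in for \<open>eventually P at_top\<close>, which requires an order, not a preorder.\<close>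

definition eventually_above :: "('a::preorder \<Rightarrow> bool) \<Rightarrow> bool" where
  "eventually_above P \<longleftrightarrow> (\<exists>a0. \<forall>a. a0 \<le> a \<longrightarrow> P a)"

lemma eventually_above_mono:
  "eventually_above P \<Longrightarrow> (\<And>a. P a \<Longrightarrow> Q a) \<Longrightarrow> eventually_above Q"
  unfolding eventually_above_def by blast

lemma eventually_above_conj:
  assumes "directed (UNIV :: 'a::preorder set)"
    and "eventually_above P" "eventually_above (Q :: 'a \<Rightarrow> bool)"
  shows "eventually_above (\<lambda>a. P a \<and> Q a)"
proof -
  obtain a1 a2 where "\<forall>a. a1 \<le> a \<longrightarrow> P a" "\<forall>a. a2 \<le> a \<longrightarrow> Q a"
    using assms(2,3) unfolding eventually_above_def by blast
  moreover obtain a0 where "a1 \<le> a0" "a2 \<le> a0"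
    using assms(1) unfolding directed_def by blast
  ultimately show ?thesis
    unfolding eventually_above_def by (meson order_trans)
qed

lemma eventually_above_ex: "eventually_above P \<Longrightarrow> \<exists>a. P a"
  unfolding eventually_above_def by blast

lemma inverse_system_bonded_eq_eventually:
  assumes C: "category C" and X: "inverse_system C X p"
    and h: "\<And>j. h j \<in> Mor C" "\<And>j. Dom C (h j) = X a"
    and k: "\<And>j. k j \<in> Mor C" "\<And>j. Dom C (k j) = X b"
    and le: "a \<le> l0" "b \<le> l0"
    and eq: "eventually_above (\<lambda>j. Comp C (h j) (p a l0) = Comp C (k j) (p b l0))"
  shows "eventually_above (\<lambda>l. a \<le> l \<and> b \<le> l \<and>
           eventually_above (\<lambda>j. Comp C (h j) (p a l) = Comp C (k j) (p b l)))"
proof -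
  have "a \<le> l \<and> b \<le> l \<and>
      eventually_above (\<lambda>j. Comp C (h j) (p a l) = Comp C (k j) (p b l))" if "l0 \<le> l" for l
  proof (intro conjI)
    show "a \<le> l" "b \<le> l" using le that by (auto intro: order_trans)
    show "eventually_above (\<lambda>j. Comp C (h j) (p a l) = Comp C (k j) (p b l))"
      using eq by (rule eventually_above_mono)
        (rule inverse_system_bonded_eq_mono[OF C X h(1,2) k(1,2) le that])
  qed
  then show ?thesis
    unfolding eventually_above_def [of "\<lambda>l. a \<le> l \<and> _ l"] by blast
qed

lemma J_morphism_square_eventually:
  assumes C: "category C" and X: "inverse_system C X p" and Y: "inverse_system C Y q"
    and f: "J_morphism C X p Y q fF" and "u \<le> u'"
  shows "eventually_above (\<lambda>l. fst fF u \<le> l \<and> fst fF u' \<le> l \<and>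
           eventually_above (\<lambda>j. Comp C (snd fF j u) (p (fst fF u) l) =
             Comp C (Comp C (q u u') (snd fF j u')) (p (fst fF u') l)))"
proof -
  note fj = J_morphism_component[OF f] and qb = inverse_system_bond[OF Y \<open>u \<le> u'\<close>]
  obtain l0 where le: "fst fF u \<le> l0" "fst fF u' \<le> l0" and
    eq: "eventually_above (\<lambda>j. Comp C (snd fF j u) (p (fst fF u) l0) =
           Comp C (q u u') (Comp C (snd fF j u') (p (fst fF u') l0)))"
    using f \<open>u \<le> u'\<close> unfolding J_morphism_def eventually_above_def by blast
  have "Comp C (q u u') (Comp C (snd fF j u') (p (fst fF u') l0)) =
        Comp C (Comp C (q u u') (snd fF j u')) (p (fst fF u') l0)" for j
    using category_assoc[OF C] fj qb inverse_system_bond[OF X le(2)] by simp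
  with eq have eq': "eventually_above (\<lambda>j. Comp C (snd fF j u) (p (fst fF u) l0) =
           Comp C (Comp C (q u u') (snd fF j u')) (p (fst fF u') l0))"
    by simp
  show ?thesis
    by (rule inverse_system_bonded_eq_eventually[OF C X, where h = "\<lambda>j. snd fF j u"
          and k = "\<lambda>j. Comp C (q u u') (snd fF j u')", OF _ _ _ _ le eq'])
      (simp_all add: fj qb category_comp[OF C])
qed

lemma J_equiv_eventually:
  assumes C: "category C" and X: "inverse_system C X p"
    and f: "J_morphism C X p Y q fF" and f': "J_morphism C X p Y q fF'"
    and "J_equiv C p fF fF'"
  shows "eventually_above (\<lambda>l. fst fF u \<le> l \<and> fst fF' u \<le> l \<and>
           eventually_above (\<lambda>j. Comp C (snd fF j u) (p (fst fF u) l) =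
             Comp C (snd fF' j u) (p (fst fF' u) l)))"
proof -
  obtain l0 where "fst fF u \<le> l0" "fst fF' u \<le> l0"
    "eventually_above (\<lambda>j. Comp C (snd fF j u) (p (fst fF u) l0) =
       Comp C (snd fF' j u) (p (fst fF' u) l0))"
    using \<open>J_equiv C p fF fF'\<close> unfolding J_equiv_def eventually_above_def by blast
  then show ?thesis
    by (intro inverse_system_bonded_eq_eventually[OF C X, where h = "\<lambda>j. snd fF j u"
          and k = "\<lambda>j. snd fF' j u"])
      (simp_all add: J_morphism_component[OF f] J_morphism_component[OF f'])
qed

lemma J_comp_bonded_eq:
  assumes C: "category C" and X: "inverse_system C X p" and Y: "inverse_system C Y q"
    and f: "J_morphism C X p Y q fF" and f': "J_morphism C X p Y q fF'"
    and g: "J_morphism C Y q Z r gG" and g': "J_morphism C Y q Z r gG'"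
    and m: "fst gG v \<le> m" "fst gG' v \<le> m"
    and l: "fst fF (fst gG v) \<le> l" "fst fF m \<le> l" "fst fF' (fst gG' v) \<le> l" "fst fF' m \<le> l"
    and top: "Comp C (snd gG j v) (q (fst gG v) m) = Comp C (snd gG' j v) (q (fst gG' v) m)"
    and left: "Comp C (snd fF j (fst gG v)) (p (fst fF (fst gG v)) l) =
      Comp C (Comp C (q (fst gG v) m) (snd fF j m)) (p (fst fF m) l)"
    and right: "Comp C (snd fF' j (fst gG' v)) (p (fst fF' (fst gG' v)) l) =
      Comp C (Comp C (q (fst gG' v) m) (snd fF' j m)) (p (fst fF' m) l)"
    and bottom: "Comp C (snd fF j m) (p (fst fF m) l) = Comp C (snd fF' j m) (p (fst fF' m) l)"
  shows "Comp C (Comp C (snd gG j v) (snd fF j (fst gG v))) (p (fst fF (fst gG v)) l) =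
    Comp C (Comp C (snd gG' j v) (snd fF' j (fst gG' v))) (p (fst fF' (fst gG' v)) l)"
  by (rule category_paste[OF C _ _ _ _ _ _ _ _ _ _ _ _ _ _ _ _ _ _ _ _ _ _ top left right bottom])
    (simp_all add: J_morphism_component[OF f] J_morphism_component[OF f']
      J_morphism_component[OF g] J_morphism_component[OF g']
      inverse_system_bond[OF X] inverse_system_bond[OF Y] l m)

lemma J_comp_equiv_at:
  assumes C: "category C" and J: "directed (UNIV :: 'j::order set)"
    and X: "inverse_system C X p" and Y: "inverse_system C Y q"
    and f: "J_morphism C X p Y q fF" and f': "J_morphism C X p Y q fF'"
    and g: "J_morphism C Y q Z r gG" and g': "J_morphism C Y q Z r gG'"
    and ff': "J_equiv C p fF fF'" and gg': "J_equiv C q gG gG'"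
  shows "\<exists>l. fst fF (fst gG v) \<le> l \<and> fst fF' (fst gG' v) \<le> l \<and> eventually_above (\<lambda>j::'j.
    Comp C (Comp C (snd gG j v) (snd fF j (fst gG v))) (p (fst fF (fst gG v)) l) =
    Comp C (Comp C (snd gG' j v) (snd fF' j (fst gG' v))) (p (fst fF' (fst gG' v)) l))"
proof -
  obtain m where m: "fst gG v \<le> m" "fst gG' v \<le> m" and top: "eventually_above (\<lambda>j.
      Comp C (snd gG j v) (q (fst gG v) m) = Comp C (snd gG' j v) (q (fst gG' v) m))"
    using gg' unfolding J_equiv_def eventually_above_def by blast
  note L = inverse_system_directed[OF X]
  obtain l where left: "fst fF (fst gG v) \<le> l" "fst fF m \<le> l" "eventually_above (\<lambda>j.
      Comp C (snd fF j (fst gG v)) (p (fst fF (fst gG v)) l) =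
      Comp C (Comp C (q (fst gG v) m) (snd fF j m)) (p (fst fF m) l))"
    and right: "fst fF' (fst gG' v) \<le> l" "fst fF' m \<le> l" "eventually_above (\<lambda>j.
      Comp C (snd fF' j (fst gG' v)) (p (fst fF' (fst gG' v)) l) =
      Comp C (Comp C (q (fst gG' v) m) (snd fF' j m)) (p (fst fF' m) l))"
    and bottom: "eventually_above (\<lambda>j.
      Comp C (snd fF j m) (p (fst fF m) l) = Comp C (snd fF' j m) (p (fst fF' m) l))"
    using eventually_above_ex[OF eventually_above_conj[OF L
        J_morphism_square_eventually[OF C X Y f m(1)]
        eventually_above_conj[OF L J_morphism_square_eventually[OF C X Y f' m(2)]
          J_equiv_eventually[OF C X f f' ff']]]]
    by blast
  have "eventually_above (\<lambda>j.
      Comp C (Comp C (snd gG j v) (snd fF j (fst gG v))) (p (fst fF (fst gG v)) l) =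
      Comp C (Comp C (snd gG' j v) (snd fF' j (fst gG' v))) (p (fst fF' (fst gG' v)) l))"
    using eventually_above_conj[OF J top eventually_above_conj[OF J left(3)
        eventually_above_conj[OF J right(3) bottom]]]
    by (rule eventually_above_mono)
      (use J_comp_bonded_eq[OF C X Y f f' g g' m left(1,2) right(1,2)] in blast)
  with left(1) right(1) show ?thesis by blast
qed

theorem lemma4:
  fixes C :: "('o, 'm, 'x) cat_scheme"
    and X :: "'l::preorder \<Rightarrow> 'o" and p :: "'l \<Rightarrow> 'l \<Rightarrow> 'm"
    and Y :: "'u::preorder \<Rightarrow> 'o" and q :: "'u \<Rightarrow> 'u \<Rightarrow> 'm"
    and Z :: "'v::preorder \<Rightarrow> 'o" and r :: "'v \<Rightarrow> 'v \<Rightarrow> 'm"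
    and fF fF' :: "('u \<Rightarrow> 'l) \<times> ('j::order \<Rightarrow> 'u \<Rightarrow> 'm)"
    and gG gG' :: "('v \<Rightarrow> 'u) \<times> ('j \<Rightarrow> 'v \<Rightarrow> 'm)"
  assumes "category C"
    and "directed (UNIV :: 'j set)"
    and "inverse_system C X p" and "inverse_system C Y q" and "inverse_system C Z r"
    and "J_morphism C X p Y q fF" and "J_morphism C X p Y q fF'"
    and "J_morphism C Y q Z r gG" and "J_morphism C Y q Z r gG'"
    and "J_equiv C p fF fF'" and "J_equiv C q gG gG'"
  shows "J_equiv C p (J_comp C gG fF) (J_comp C gG' fF')"
  using J_comp_equiv_at[OF assms(1-4,6-11)]
  unfolding J_equiv_def J_comp_def eventually_above_def by simp

end
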